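(* Let $a\neq 0$ be a constant and let $\phi(x,t)$ be a smooth function with $\phi_x\neq0$ satisfying the Schwarz–KdV equation $\frac{\phi_t}{\phi_x}+a\{\phi;x\}=0$. Then $u=a\{\phi;x\}$ solves the KdV equation $u_t+au_{xxx}+3uu_x=0$, and for any constants $A,B$ not both zero, on a region where $A\phi+B\neq0$, the function $$\widetilde u=a\{\phi;x\}+4a\Big(\log\frac{A\phi+B}{\sqrt{\phi_x}}\Big)_{xx}$$ also solves the KdV equation $\widetilde u_t+a\widetilde u_{xxx}+3\widetilde u\widetilde u_x=0$.
   Context: The Schwarzian derivative of a function $\phi(x,t)$ with $\phi_x\neq0$ is $\{\phi;x\}=\frac{\phi_{xxx}}{\phi_x}-\frac32\frac{\phi_{xx}^2}{\phi_x^2}$. All functions are smooth. *)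

theory Defs
  imports "HOL-Analysis.Analysis"
begin

definition px :: "(real \<Rightarrow> real \<Rightarrow> real) \<Rightarrow> real \<Rightarrow> real \<Rightarrow> real" where
  "px f = (\<lambda>x t. deriv (\<lambda>y. f y t) x)"

definition pt :: "(real \<Rightarrow> real \<Rightarrow> real) \<Rightarrow> real \<Rightarrow> real \<Rightarrow> real" where
  "pt f = (\<lambda>x t. deriv (\<lambda>s. f x s) t)"

fun dpart :: "bool list \<Rightarrow> (real \<Rightarrow> real \<Rightarrow> real) \<Rightarrow> real \<Rightarrow> real \<Rightarrow> real" where
  "dpart [] f = f"
| "dpart (b # bs) f = (if b then px else pt) (dpart bs f)"

definition smooth_on2 :: "(real \<times> real) set \<Rightarrow> (real \<Rightarrow> real \<Rightarrow> real) \<Rightarrow> bool" where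
  "smooth_on2 S f \<longleftrightarrow> (\<forall>ws. (\<lambda>(x, t). dpart ws f x t) differentiable_on S)"

definition schwarzian :: "(real \<Rightarrow> real \<Rightarrow> real) \<Rightarrow> real \<Rightarrow> real \<Rightarrow> real" where
  "schwarzian phi x t =
     px (px (px phi)) x t / px phi x t - 3 / 2 * (px (px phi) x t / px phi x t)\<^sup>2"

definition KdV_at :: "real \<Rightarrow> (real \<Rightarrow> real \<Rightarrow> real) \<Rightarrow> real \<Rightarrow> real \<Rightarrow> bool" where
  "KdV_at a u x t \<longleftrightarrow> pt u x t + a * px (px (px u)) x t + 3 * u x t * px u x t = 0"

end

theory Submission
  imports Defs
begin

text \<open>Write \<open>p = \<phi>\<^sub>x\<close>. The Schwarzian \<open>{\<phi>;x} = p\<^sub>x\<^sub>x/p - 3/2 (p\<^sub>x/p)\<^sup>2\<close> depends only on \<open>p\<close>, and the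
  Schwarz--KdV equation says \<open>\<phi>\<^sub>t = q \<phi>\<^sub>x\<close> with \<open>q = -a{\<phi>;x}\<close>, i.e. \<open>p\<^sub>t = (q p)\<^sub>x\<close>. Whenever
  \<open>p\<^sub>t = (q p)\<^sub>x\<close>, the Schwarzian \<open>S\<close> of \<open>p\<close> obeys \<open>S\<^sub>t = q\<^sub>x\<^sub>x\<^sub>x + 2 S q\<^sub>x + S\<^sub>x q\<close>; for \<open>q = -a S\<close> this is
  the KdV equation for \<open>u = a S\<close>.

  For the second solution put \<open>w = A \<phi> + B\<close> and \<open>p\<^sup>~ = w\<^sup>2/\<phi>\<^sub>x\<close> (the \<open>x\<close>-derivative of a new solution of the
  Schwarz--KdV equation). A direct computation shows that \<open>p\<^sup>~\<^sub>t = (-a S(p\<^sup>~) p\<^sup>~)\<^sub>x\<close> and that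
  \<open>S(p\<^sup>~) = {\<phi>;x} + 4 (log (w/\<surd>\<phi>\<^sub>x))\<^sub>x\<^sub>x\<close>, so \<open>u\<^sup>~ = a S(p\<^sup>~)\<close> solves KdV by the first part.
  Time and space derivatives are interchanged by the Schwarz--Clairaut theorem.\<close>

lemma px_has_real_derivative:
  assumes "open S" "(\<lambda>(x, t). f x t) differentiable_on S" "(x, t) \<in> S"
  shows "((\<lambda>y. f y t) has_real_derivative px f x t) (at x)"
proof -
  have "((\<lambda>(x, t). f x t) \<circ> (\<lambda>y. (y, t))) differentiable (at x)"
    using assms differentiable_on_eq_differentiable_at
    by (intro differentiable_chain_at) (auto intro!: derivative_intros)
  then show ?thesis
    unfolding px_def by (simp add: o_def DERIV_deriv_iff_real_differentiable)
qed

lemma pt_has_real_derivative: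
  assumes "open S" "(\<lambda>(x, t). f x t) differentiable_on S" "(x, t) \<in> S"
  shows "((\<lambda>s. f x s) has_real_derivative pt f x t) (at t)"
proof -
  have "((\<lambda>(x, t). f x t) \<circ> (\<lambda>s. (x, s))) differentiable (at t)"
    using assms differentiable_on_eq_differentiable_at
    by (intro differentiable_chain_at) (auto intro!: derivative_intros)
  then show ?thesis
    unfolding pt_def by (simp add: o_def DERIV_deriv_iff_real_differentiable)
qed

lemma px_eqI: "((\<lambda>y. f y t) has_real_derivative D) (at x) \<Longrightarrow> px f x t = D"
  unfolding px_def by (rule DERIV_imp_deriv)

lemma pt_eqI: "((\<lambda>s. f x s) has_real_derivative D) (at t) \<Longrightarrow> pt f x t = D"
  unfolding pt_def by (rule DERIV_imp_deriv)

lemma px_cong: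
  assumes "open S" "(x, t) \<in> S" "\<forall>(y, s)\<in>S. f y s = g y s"
  shows "px f x t = px g x t"
proof -
  have "open ((\<lambda>y. (y, t)) -` S)"
    using assms(1) by (intro open_vimage continuous_intros)
  then have "eventually (\<lambda>y. (y, t) \<in> S) (nhds x)"
    using assms(2) eventually_nhds_in_open by fastforce
  then have "eventually (\<lambda>y. f y t = g y t) (nhds x)"
    by eventually_elim (use assms(3) in auto)
  then show ?thesis
    unfolding px_def by (rule deriv_cong_ev) simp
qed

lemma pt_cong:
  assumes "open S" "(x, t) \<in> S" "\<forall>(y, s)\<in>S. f y s = g y s"
  shows "pt f x t = pt g x t"
proof -
  have "open ((\<lambda>s. (x, s)) -` S)"
    using assms(1) by (intro open_vimage continuous_intros)
  then have "eventually (\<lambda>s. (x, s) \<in> S) (nhds t)"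
    using assms(2) eventually_nhds_in_open by fastforce
  then have "eventually (\<lambda>s. f x s = g x s) (nhds t)"
    by eventually_elim (use assms(3) in auto)
  then show ?thesis
    unfolding pt_def by (rule deriv_cong_ev) simp
qed

section \<open>Symmetry of mixed partial derivatives\<close>

lemma integral_eq_diff_if_has_real_derivative:
  fixes g g' :: "real \<Rightarrow> real"
  assumes "a \<le> b" "\<And>s. s \<in> {a..b} \<Longrightarrow> (g has_real_derivative g' s) (at s)"
  shows "integral {a..b} g' = g b - g a"
proof -
  have "(g has_vector_derivative g' s) (at s within {a..b})" if "s \<in> {a..b}" for s
    using assms(2)[OF that] has_real_derivative_iff_has_vector_derivative has_vector_derivative_at_within
    by blast
  then have "(g' has_integral (g b - g a)) {a..b}"
    using assms(1) by (intro fundamental_theorem_of_calculus)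
  then show ?thesis
    by (rule integral_unique)
qed

lemma has_real_derivative_parametric_integral:
  fixes g gt :: "real \<Rightarrow> real \<Rightarrow> real"
  assumes T: "convex T" "open T" "t \<in> T"
    and gt: "\<And>s t. s \<in> {c..y} \<Longrightarrow> t \<in> T \<Longrightarrow> ((\<lambda>t. g s t) has_real_derivative gt s t) (at t)"
    and g_cont: "\<And>t. t \<in> T \<Longrightarrow> continuous_on {c..y} (\<lambda>s. g s t)"
    and gt_cont: "continuous_on ({c..y} \<times> T) (\<lambda>(s, t). gt s t)"
  shows "((\<lambda>t. integral {c..y} (\<lambda>s. g s t)) has_real_derivative integral {c..y} (\<lambda>s. gt s t)) (at t)"
proof -
  have "((\<lambda>t. integral (cbox c y) (\<lambda>s. g s t)) has_real_derivative integral (cbox c y) (\<lambda>s. gt s t))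
      (at t within T)"
  proof (rule leibniz_rule_field_derivative[where f = "\<lambda>t s. g s t" and fx = "\<lambda>t s. gt s t"])
    show "continuous_on (T \<times> cbox c y) (\<lambda>(t, s). gt s t)"
      using continuous_on_swap_args[OF gt_cont] by simp
  qed (use T gt g_cont in \<open>auto intro: has_field_derivative_at_within integrable_continuous_real\<close>)
  then show ?thesis
    using at_within_open[OF T(3,2)] by simp
qed

lemma continuous_on_slice_x:
  assumes "continuous_on S (\<lambda>(x, t). h x t)" "A \<times> T \<subseteq> S" "t \<in> T"
  shows "continuous_on A (\<lambda>s. h s t)"
  by (rule continuous_on_compose2[OF assms(1), of _ "\<lambda>s. (s, t)", simplified])
    (use assms in \<open>auto intro!: continuous_intros\<close>)

lemma pt_diff_eq_integral_pt_px:
  fixes f fx ft fxt :: "real \<Rightarrow> real \<Rightarrow> real"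
  assumes rect: "{c..d} \<times> T \<subseteq> S" and T: "open T" "convex T" "t0 \<in> T" and y: "y \<in> {c..d}"
    and fx: "\<And>x t. (x, t) \<in> S \<Longrightarrow> ((\<lambda>y. f y t) has_real_derivative fx x t) (at x)"
    and ft: "\<And>x t. (x, t) \<in> S \<Longrightarrow> ((\<lambda>s. f x s) has_real_derivative ft x t) (at t)"
    and fxt: "\<And>x t. (x, t) \<in> S \<Longrightarrow> ((\<lambda>s. fx x s) has_real_derivative fxt x t) (at t)"
    and fx_cont: "continuous_on S (\<lambda>(x, t). fx x t)"
    and fxt_cont: "continuous_on S (\<lambda>(x, t). fxt x t)"
  shows "ft y t0 - ft c t0 = integral {c..y} (\<lambda>s. fxt s t0)"
proof (rule DERIV_unique)
  have sub: "{c..y} \<times> T \<subseteq> S"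
    using rect y by auto
  have "(y, t0) \<in> S" "(c, t0) \<in> S"
    using rect y T(3) by auto
  then show "((\<lambda>t. f y t - f c t) has_real_derivative ft y t0 - ft c t0) (at t0)"
    by (intro DERIV_diff ft)
  have "((\<lambda>t. integral {c..y} (\<lambda>s. fx s t)) has_real_derivative integral {c..y} (\<lambda>s. fxt s t0)) (at t0)"
  proof (rule has_real_derivative_parametric_integral[OF T(2,1,3)])
    show "continuous_on ({c..y} \<times> T) (\<lambda>(s, t). fxt s t)"
      using sub by (rule continuous_on_subset[OF fxt_cont])
    show "((\<lambda>t. fx s t) has_real_derivative fxt s t) (at t)" if "s \<in> {c..y}" "t \<in> T" for s t
      using that sub by (intro fxt) auto
    show "continuous_on {c..y} (\<lambda>s. fx s t)" if "t \<in> T" for t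
      using fx_cont sub that by (rule continuous_on_slice_x)
  qed
  then show "((\<lambda>t. f y t - f c t) has_real_derivative integral {c..y} (\<lambda>s. fxt s t0)) (at t0)"
  proof (rule has_field_derivative_transform_within_open[OF _ T(1,3)])
    show "integral {c..y} (\<lambda>s. fx s t) = f y t - f c t" if "t \<in> T" for t
      using y sub that by (intro integral_eq_diff_if_has_real_derivative fx) auto
  qed
qed

text \<open>Schwarz--Clairaut, assuming only that \<open>fx\<close> and \<open>fxt\<close> are continuous: differentiating the
  fundamental theorem of calculus for \<open>f\<close> under the integral sign shows that near \<open>x\<^sub>0\<close>,
  \<open>ft(y, t\<^sub>0)\<close> is a constant plus \<open>\<integral>\<^sup>y fxt(s, t\<^sub>0) ds\<close>.\<close>
lemma mixed_partials_commute:
  fixes f fx ft fxt ftx :: "real \<Rightarrow> real \<Rightarrow> real"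
  assumes S: "open S" "(x0, t0) \<in> S"
    and fx: "\<And>x t. (x, t) \<in> S \<Longrightarrow> ((\<lambda>y. f y t) has_real_derivative fx x t) (at x)"
    and ft: "\<And>x t. (x, t) \<in> S \<Longrightarrow> ((\<lambda>s. f x s) has_real_derivative ft x t) (at t)"
    and fxt: "\<And>x t. (x, t) \<in> S \<Longrightarrow> ((\<lambda>s. fx x s) has_real_derivative fxt x t) (at t)"
    and ftx: "\<And>x t. (x, t) \<in> S \<Longrightarrow> ((\<lambda>y. ft y t) has_real_derivative ftx x t) (at x)"
    and fx_cont: "continuous_on S (\<lambda>(x, t). fx x t)"
    and fxt_cont: "continuous_on S (\<lambda>(x, t). fxt x t)"
  shows "fxt x0 t0 = ftx x0 t0"
proof -
  obtain X T where XT: "open X" "open T" "(x0, t0) \<in> X \<times> T" "X \<times> T \<subseteq> S"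
    using open_prod_elim[OF S] .
  obtain r where r: "r > 0" "cball x0 r \<subseteq> X"
    using XT open_contains_cball by blast
  obtain e where e: "e > 0" "ball t0 e \<subseteq> T"
    using XT open_contains_ball by blast
  have rect: "{x0 - r..x0 + r} \<times> ball t0 e \<subseteq> S"
    using r e XT(4) by (auto simp: cball_eq_atLeastAtMost)
  note ft_eq = pt_diff_eq_integral_pt_px[OF rect open_ball convex_ball _ _ fx ft fxt fx_cont fxt_cont]
  have "((\<lambda>y. integral {x0 - r..y} (\<lambda>s. fxt s t0)) has_real_derivative fxt x0 t0) (at x0)"
    using integral_has_real_derivative[OF continuous_on_slice_x[OF fxt_cont rect], of t0 x0] r e
    by (simp add: at_within_Icc_at)
  then have "((\<lambda>y. ft (x0 - r) t0 + integral {x0 - r..y} (\<lambda>s. fxt s t0)) has_real_derivative fxt x0 t0)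
      (at x0)"
    by (auto intro!: derivative_eq_intros)
  then have "((\<lambda>y. ft y t0) has_real_derivative fxt x0 t0) (at x0)"
  proof (rule has_field_derivative_transform_within_open[OF _ open_ball])
    show "ft (x0 - r) t0 + integral {x0 - r..y} (\<lambda>s. fxt s t0) = ft y t0" if "y \<in> ball x0 r" for y
    proof -
      have "y \<in> {x0 - r..x0 + r}"
        using that by (auto simp: dist_real_def)
      then show ?thesis
        using ft_eq[of t0 y] e by simp
    qed
  qed (use r in simp)
  then show ?thesis
    using ftx[OF S(2)] by (rule DERIV_unique)
qed

section \<open>Smooth functions of two variables\<close>

lemma dpart_append: "dpart (ws @ [b]) f = dpart ws (if b then px f else pt f)"
  by (induction ws) auto

text \<open>Smoothness up to order \<open>n\<close>; closure properties of \<^const>\<open>smooth_on2\<close> are proved by induction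
  on the order.\<close>
definition smooth_upto_on2 :: "nat \<Rightarrow> (real \<times> real) set \<Rightarrow> (real \<Rightarrow> real \<Rightarrow> real) \<Rightarrow> bool" where
  "smooth_upto_on2 n S f \<longleftrightarrow> (\<forall>ws. length ws \<le> n \<longrightarrow> (\<lambda>(x, t). dpart ws f x t) differentiable_on S)"

lemma smooth_on2_iff_smooth_upto_on2: "smooth_on2 S f \<longleftrightarrow> (\<forall>n. smooth_upto_on2 n S f)"
  unfolding smooth_on2_def smooth_upto_on2_def by blast

lemma smooth_upto_on2_0: "smooth_upto_on2 0 S f \<longleftrightarrow> (\<lambda>(x, t). f x t) differentiable_on S"
  by (simp add: smooth_upto_on2_def)

lemma smooth_upto_on2_Suc:
  "smooth_upto_on2 (Suc n) S f \<longleftrightarrow>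
     (\<lambda>(x, t). f x t) differentiable_on S \<and> smooth_upto_on2 n S (px f) \<and> smooth_upto_on2 n S (pt f)"
proof
  assume f: "smooth_upto_on2 (Suc n) S f"
  have "(\<lambda>(x, t). dpart (ws @ [b]) f x t) differentiable_on S" if "length ws \<le> n" for ws b
    using f that unfolding smooth_upto_on2_def by simp
  then show "(\<lambda>(x, t). f x t) differentiable_on S \<and> smooth_upto_on2 n S (px f) \<and> smooth_upto_on2 n S (pt f)"
    using f[unfolded smooth_upto_on2_def, rule_format, of "[]"]
    unfolding smooth_upto_on2_def dpart_append by (metis dpart.simps(1) le0 list.size(3))
next
  assume H: "(\<lambda>(x, t). f x t) differentiable_on S \<and> smooth_upto_on2 n S (px f) \<and> smooth_upto_on2 n S (pt f)"
  show "smooth_upto_on2 (Suc n) S f"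
    unfolding smooth_upto_on2_def
  proof (intro allI impI)
    fix ws :: "bool list"
    assume len: "length ws \<le> Suc n"
    show "(\<lambda>(x, t). dpart ws f x t) differentiable_on S"
    proof (cases ws rule: rev_exhaust)
      case Nil
      then show ?thesis using H by simp
    next
      case (snoc ws' b)
      then have "length ws' \<le> n"
        using len by simp
      then show ?thesis
        using H unfolding snoc dpart_append smooth_upto_on2_def by (cases b) auto
    qed
  qed
qed

lemma smooth_upto_on2_SucD: "smooth_upto_on2 (Suc n) S f \<Longrightarrow> smooth_upto_on2 n S f"
  by (simp add: smooth_upto_on2_def)

lemma differentiable_on_case_prod_cong:
  assumes "\<forall>(x, t)\<in>S. f x t = g x t" "(\<lambda>(x, t). f x t) differentiable_on S"
  shows "(\<lambda>(x, t). g x t) differentiable_on S"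
  unfolding differentiable_on_def
proof
  fix z assume z: "z \<in> S"
  then have "(\<lambda>(x, t). f x t) differentiable at z within S"
    using assms(2) unfolding differentiable_on_def by blast
  then show "(\<lambda>(x, t). g x t) differentiable at z within S"
    by (rule differentiable_transform_within[OF _ zero_less_one z]) (use assms(1) in auto)
qed

lemma smooth_upto_on2_differentiable_on:
  "smooth_upto_on2 n S f \<Longrightarrow> (\<lambda>(x, t). f x t) differentiable_on S"
  unfolding smooth_upto_on2_def by (metis dpart.simps(1) le0 list.size(3))

lemma differentiable_on_case_prod_add:
  fixes f g :: "real \<Rightarrow> real \<Rightarrow> real"
  assumes "(\<lambda>(x, t). f x t) differentiable_on S" "(\<lambda>(x, t). g x t) differentiable_on S"
  shows "(\<lambda>(x, t). f x t + g x t) differentiable_on S"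
proof -
  have "(\<lambda>(x, t). f x t + g x t) = (\<lambda>z. (\<lambda>(x, t). f x t) z + (\<lambda>(x, t). g x t) z)"
    by auto
  then show ?thesis
    using differentiable_on_add[OF assms] by simp
qed

lemma differentiable_on_case_prod_mult:
  fixes f g :: "real \<Rightarrow> real \<Rightarrow> real"
  assumes "(\<lambda>(x, t). f x t) differentiable_on S" "(\<lambda>(x, t). g x t) differentiable_on S"
  shows "(\<lambda>(x, t). f x t * g x t) differentiable_on S"
proof -
  have "(\<lambda>(x, t). f x t * g x t) = (\<lambda>z. (\<lambda>(x, t). f x t) z * (\<lambda>(x, t). g x t) z)"
    by auto
  then show ?thesis
    using differentiable_on_mult[OF assms] by simp
qed

lemma differentiable_on_case_prod_inverse:
  fixes f :: "real \<Rightarrow> real \<Rightarrow> real"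
  assumes "(\<lambda>(x, t). f x t) differentiable_on S" "\<forall>(x, t)\<in>S. f x t \<noteq> 0"
  shows "(\<lambda>(x, t). inverse (f x t)) differentiable_on S"
proof -
  have "(\<lambda>(x, t). inverse (f x t)) = (\<lambda>z. inverse ((\<lambda>(x, t). f x t) z))"
    by auto
  then show ?thesis
    using differentiable_on_inverse[OF assms(1)] assms(2) by auto
qed

lemma smooth_on2_px: "smooth_on2 S f \<Longrightarrow> smooth_on2 S (px f)"
  unfolding smooth_on2_iff_smooth_upto_on2 using smooth_upto_on2_Suc by blast

lemma smooth_on2_pt: "smooth_on2 S f \<Longrightarrow> smooth_on2 S (pt f)"
  unfolding smooth_on2_iff_smooth_upto_on2 using smooth_upto_on2_Suc by blast

lemma smooth_on2_subset: "smooth_on2 S f \<Longrightarrow> T \<subseteq> S \<Longrightarrow> smooth_on2 T f"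
  unfolding smooth_on2_def using differentiable_on_subset by blast

context
  fixes S :: "(real \<times> real) set"
  assumes S: "open S"
begin

lemma smooth_upto_on2_cong:
  "\<forall>(x, t)\<in>S. f x t = g x t \<Longrightarrow> smooth_upto_on2 n S f \<Longrightarrow> smooth_upto_on2 n S g"
proof (induction n arbitrary: f g)
  case 0
  then show ?case
    using differentiable_on_case_prod_cong unfolding smooth_upto_on2_0 by blast
next
  case (Suc n)
  have "\<forall>(x, t)\<in>S. px f x t = px g x t" "\<forall>(x, t)\<in>S. pt f x t = pt g x t"
    using Suc.prems(1) S by (auto intro: px_cong pt_cong)
  then show ?case
    using Suc.prems differentiable_on_case_prod_cong Suc.IH unfolding smooth_upto_on2_Suc by blast
qed

lemma smooth_upto_on2_const: "smooth_upto_on2 n S (\<lambda>x t. c)"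
proof -
  have diff: "(\<lambda>(x, t). c) differentiable_on S" for c :: real
  proof -
    have "(\<lambda>(x::real, t::real). c) = (\<lambda>z. c)"
      by auto
    then show ?thesis by simp
  qed
  have "px (\<lambda>x t. c) = (\<lambda>x t. 0)" "pt (\<lambda>x t. c) = (\<lambda>x t. 0)" for c :: real
    by (auto simp: px_def pt_def)
  then show ?thesis
    by (induction n arbitrary: c) (simp_all add: smooth_upto_on2_0 smooth_upto_on2_Suc diff)
qed

lemma smooth_upto_on2_has_px:
  "smooth_upto_on2 n S f \<Longrightarrow> (x, t) \<in> S \<Longrightarrow> ((\<lambda>y. f y t) has_real_derivative px f x t) (at x)"
  by (rule px_has_real_derivative[OF S smooth_upto_on2_differentiable_on])

lemma smooth_upto_on2_has_pt:
  "smooth_upto_on2 n S f \<Longrightarrow> (x, t) \<in> S \<Longrightarrow> ((\<lambda>s. f x s) has_real_derivative pt f x t) (at t)"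
  by (rule pt_has_real_derivative[OF S smooth_upto_on2_differentiable_on])

lemma smooth_upto_on2_add:
  "smooth_upto_on2 n S f \<Longrightarrow> smooth_upto_on2 n S g \<Longrightarrow> smooth_upto_on2 n S (\<lambda>x t. f x t + g x t)"
proof (induction n arbitrary: f g)
  case 0
  then show ?case
    by (simp add: smooth_upto_on2_0 differentiable_on_case_prod_add)
next
  case (Suc n)
  note f = smooth_upto_on2_has_px[OF Suc.prems(1)] smooth_upto_on2_has_pt[OF Suc.prems(1)]
  note g = smooth_upto_on2_has_px[OF Suc.prems(2)] smooth_upto_on2_has_pt[OF Suc.prems(2)]
  have px_eq: "\<forall>(x, t)\<in>S. px f x t + px g x t = px (\<lambda>x t. f x t + g x t) x t"
    by (auto intro!: px_eqI[symmetric] DERIV_add f g)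
  have pt_eq: "\<forall>(x, t)\<in>S. pt f x t + pt g x t = pt (\<lambda>x t. f x t + g x t) x t"
    by (auto intro!: pt_eqI[symmetric] DERIV_add f g)
  have "smooth_upto_on2 n S (\<lambda>x t. px f x t + px g x t)" "smooth_upto_on2 n S (\<lambda>x t. pt f x t + pt g x t)"
    using Suc by (simp_all add: smooth_upto_on2_Suc)
  then have "smooth_upto_on2 n S (px (\<lambda>x t. f x t + g x t))"
    "smooth_upto_on2 n S (pt (\<lambda>x t. f x t + g x t))"
    using smooth_upto_on2_cong[OF px_eq] smooth_upto_on2_cong[OF pt_eq] by blast+
  then show ?case
    using Suc.prems by (simp add: smooth_upto_on2_Suc differentiable_on_case_prod_add)
qed

lemma smooth_upto_on2_mult:
  "smooth_upto_on2 n S f \<Longrightarrow> smooth_upto_on2 n S g \<Longrightarrow> smooth_upto_on2 n S (\<lambda>x t. f x t * g x t)"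
proof (induction n arbitrary: f g)
  case 0
  then show ?case
    by (simp add: smooth_upto_on2_0 differentiable_on_case_prod_mult)
next
  case (Suc n)
  note f = smooth_upto_on2_has_px[OF Suc.prems(1)] smooth_upto_on2_has_pt[OF Suc.prems(1)]
  note g = smooth_upto_on2_has_px[OF Suc.prems(2)] smooth_upto_on2_has_pt[OF Suc.prems(2)]
  have px_eq: "\<forall>(x, t)\<in>S. px f x t * g x t + px g x t * f x t = px (\<lambda>x t. f x t * g x t) x t"
    by (auto intro!: px_eqI[symmetric] DERIV_mult f g)
  have pt_eq: "\<forall>(x, t)\<in>S. pt f x t * g x t + pt g x t * f x t = pt (\<lambda>x t. f x t * g x t) x t"
    by (auto intro!: pt_eqI[symmetric] DERIV_mult f g)
  have "smooth_upto_on2 n S f" "smooth_upto_on2 n S (px f)" "smooth_upto_on2 n S (pt f)"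
    "smooth_upto_on2 n S g" "smooth_upto_on2 n S (px g)" "smooth_upto_on2 n S (pt g)"
    using Suc.prems smooth_upto_on2_SucD[of n] unfolding smooth_upto_on2_Suc by blast+
  then have "smooth_upto_on2 n S (\<lambda>x t. px f x t * g x t + px g x t * f x t)"
    "smooth_upto_on2 n S (\<lambda>x t. pt f x t * g x t + pt g x t * f x t)"
    by (simp_all add: smooth_upto_on2_add Suc.IH)
  then have "smooth_upto_on2 n S (px (\<lambda>x t. f x t * g x t))"
    "smooth_upto_on2 n S (pt (\<lambda>x t. f x t * g x t))"
    using smooth_upto_on2_cong[OF px_eq] smooth_upto_on2_cong[OF pt_eq] by blast+
  then show ?case
    using Suc.prems by (simp add: smooth_upto_on2_Suc differentiable_on_case_prod_mult)
qed

lemma smooth_upto_on2_uminus: "smooth_upto_on2 n S f \<Longrightarrow> smooth_upto_on2 n S (\<lambda>x t. - f x t)"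
  using smooth_upto_on2_mult[OF smooth_upto_on2_const[of n "-1"]] by simp

lemma smooth_upto_on2_inverse:
  "smooth_upto_on2 n S f \<Longrightarrow> \<forall>(x, t)\<in>S. f x t \<noteq> 0 \<Longrightarrow> smooth_upto_on2 n S (\<lambda>x t. inverse (f x t))"
proof (induction n arbitrary: f)
  case 0
  then show ?case
    by (simp add: smooth_upto_on2_0 differentiable_on_case_prod_inverse)
next
  case (Suc n)
  note f = smooth_upto_on2_has_px[OF Suc.prems(1)] smooth_upto_on2_has_pt[OF Suc.prems(1)]
  have px_eq: "\<forall>(x, t)\<in>S. - (inverse (f x t) * px f x t * inverse (f x t)) = px (\<lambda>x t. inverse (f x t)) x t"
    using Suc.prems(2) by (auto intro!: px_eqI[symmetric] DERIV_inverse' f)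
  have pt_eq: "\<forall>(x, t)\<in>S. - (inverse (f x t) * pt f x t * inverse (f x t)) = pt (\<lambda>x t. inverse (f x t)) x t"
    using Suc.prems(2) by (auto intro!: pt_eqI[symmetric] DERIV_inverse' f)
  have "smooth_upto_on2 n S (\<lambda>x t. inverse (f x t))" "smooth_upto_on2 n S (px f)" "smooth_upto_on2 n S (pt f)"
    using Suc smooth_upto_on2_SucD[of n] unfolding smooth_upto_on2_Suc by blast+
  then have "smooth_upto_on2 n S (\<lambda>x t. - (inverse (f x t) * px f x t * inverse (f x t)))"
    "smooth_upto_on2 n S (\<lambda>x t. - (inverse (f x t) * pt f x t * inverse (f x t)))"
    by (simp_all add: smooth_upto_on2_uminus smooth_upto_on2_mult)
  then have "smooth_upto_on2 n S (px (\<lambda>x t. inverse (f x t)))"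
    "smooth_upto_on2 n S (pt (\<lambda>x t. inverse (f x t)))"
    using smooth_upto_on2_cong[OF px_eq] smooth_upto_on2_cong[OF pt_eq] by blast+
  then show ?case
    using Suc.prems by (simp add: smooth_upto_on2_Suc differentiable_on_case_prod_inverse)
qed

lemma smooth_on2_has_px:
  "smooth_on2 S f \<Longrightarrow> (x, t) \<in> S \<Longrightarrow> ((\<lambda>y. f y t) has_real_derivative px f x t) (at x)"
  using smooth_upto_on2_has_px by (auto simp: smooth_on2_iff_smooth_upto_on2)

lemma smooth_on2_has_pt:
  "smooth_on2 S f \<Longrightarrow> (x, t) \<in> S \<Longrightarrow> ((\<lambda>s. f x s) has_real_derivative pt f x t) (at t)"
  using smooth_upto_on2_has_pt by (auto simp: smooth_on2_iff_smooth_upto_on2)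

lemma smooth_on2_const: "smooth_on2 S (\<lambda>x t. c)"
  by (simp add: smooth_on2_iff_smooth_upto_on2 smooth_upto_on2_const)

lemma smooth_on2_add:
  "smooth_on2 S f \<Longrightarrow> smooth_on2 S g \<Longrightarrow> smooth_on2 S (\<lambda>x t. f x t + g x t)"
  by (simp add: smooth_on2_iff_smooth_upto_on2 smooth_upto_on2_add)

lemma smooth_on2_mult:
  "smooth_on2 S f \<Longrightarrow> smooth_on2 S g \<Longrightarrow> smooth_on2 S (\<lambda>x t. f x t * g x t)"
  by (simp add: smooth_on2_iff_smooth_upto_on2 smooth_upto_on2_mult)

lemma smooth_on2_inverse:
  "smooth_on2 S f \<Longrightarrow> \<forall>(x, t)\<in>S. f x t \<noteq> 0 \<Longrightarrow> smooth_on2 S (\<lambda>x t. inverse (f x t))"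
  by (simp add: smooth_on2_iff_smooth_upto_on2 smooth_upto_on2_inverse)

lemma smooth_on2_diff:
  "smooth_on2 S f \<Longrightarrow> smooth_on2 S g \<Longrightarrow> smooth_on2 S (\<lambda>x t. f x t - g x t)"
proof -
  assume "smooth_on2 S f" "smooth_on2 S g"
  then have "smooth_on2 S (\<lambda>x t. f x t + (-1) * g x t)"
    by (intro smooth_on2_add smooth_on2_mult smooth_on2_const)
  then show ?thesis by simp
qed

lemma smooth_on2_divide:
  "smooth_on2 S f \<Longrightarrow> smooth_on2 S g \<Longrightarrow> \<forall>(x, t)\<in>S. g x t \<noteq> 0 \<Longrightarrow> smooth_on2 S (\<lambda>x t. f x t / g x t)"
  using smooth_on2_mult[OF _ smooth_on2_inverse] by (simp add: divide_inverse)

lemma smooth_on2_power2: "smooth_on2 S f \<Longrightarrow> smooth_on2 S (\<lambda>x t. (f x t)\<^sup>2)"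
  using smooth_on2_mult[of f f] by (simp add: power2_eq_square)

lemma pt_px_commute:
  assumes f: "smooth_on2 S f" and xt: "(x, t) \<in> S"
  shows "pt (px f) x t = px (pt f) x t"
proof (rule mixed_partials_commute[OF S xt])
  have diff: "(\<lambda>(x, t). g x t) differentiable_on S" if "smooth_on2 S g" for g
    using that smooth_on2_def[of S g] by (metis dpart.simps(1))
  show "continuous_on S (\<lambda>(x, t). px f x t)" "continuous_on S (\<lambda>(x, t). pt (px f) x t)"
    using f by (auto intro!: differentiable_imp_continuous_on diff smooth_on2_px smooth_on2_pt)
qed (use f in \<open>auto intro: smooth_on2_has_px smooth_on2_has_pt smooth_on2_px smooth_on2_pt\<close>)

lemma pt_px_eq_px_px:
  assumes "smooth_on2 S f" "\<forall>(x, t)\<in>S. pt f x t = px g x t" "(x, t) \<in> S"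
  shows "pt (px f) x t = px (px g) x t"
  using assms pt_px_commute px_cong[OF S] by metis

lemma px_px_mult:
  assumes f: "smooth_on2 S f" and g: "smooth_on2 S g" and xt: "(x, t) \<in> S"
  shows "px (px (\<lambda>x t. f x t * g x t)) x t
    = px (px f) x t * g x t + 2 * px f x t * px g x t + f x t * px (px g) x t"
proof -
  note d = smooth_on2_has_px smooth_on2_px
  have "\<forall>(x, t)\<in>S. px (\<lambda>x t. f x t * g x t) x t = px f x t * g x t + f x t * px g x t"
    using f g by (auto intro!: px_eqI derivative_eq_intros d)
  then have "px (px (\<lambda>x t. f x t * g x t)) x t = px (\<lambda>x t. px f x t * g x t + f x t * px g x t) x t"
    by (rule px_cong[OF S xt])
  also have "\<dots> = px (px f) x t * g x t + 2 * px f x t * px g x t + f x t * px (px g) x t"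
    using f g xt by (auto intro!: px_eqI derivative_eq_intros d)
  finally show ?thesis .
qed

lemma px_px_px_mult:
  assumes f: "smooth_on2 S f" and g: "smooth_on2 S g" and xt: "(x, t) \<in> S"
  shows "px (px (px (\<lambda>x t. f x t * g x t))) x t
    = px (px (px f)) x t * g x t + 3 * px (px f) x t * px g x t
      + 3 * px f x t * px (px g) x t + f x t * px (px (px g)) x t"
proof -
  note d = smooth_on2_has_px smooth_on2_px
  have "px (px (px (\<lambda>x t. f x t * g x t))) x t
      = px (\<lambda>x t. px (px f) x t * g x t + 2 * px f x t * px g x t + f x t * px (px g) x t) x t"
    using px_px_mult[OF f g] by (intro px_cong[OF S xt]) auto
  also have "\<dots> = px (px (px f)) x t * g x t + 3 * px (px f) x t * px g x t
      + 3 * px f x t * px (px g) x t + f x t * px (px (px g)) x t"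
    using f g xt by (auto intro!: px_eqI derivative_eq_intros d)
  finally show ?thesis .
qed

lemma smooth_on2_funpow_px: "smooth_on2 S f \<Longrightarrow> smooth_on2 S ((px ^^ n) f)"
  by (induction n) (simp_all add: smooth_on2_px)

lemma funpow_px_cmult:
  assumes "smooth_on2 S f" "(x, t) \<in> S"
  shows "(px ^^ n) (\<lambda>x t. c * f x t) x t = c * (px ^^ n) f x t"
  using assms(2)
proof (induction n arbitrary: x t)
  case (Suc n)
  then have "px ((px ^^ n) (\<lambda>x t. c * f x t)) x t = px (\<lambda>x t. c * (px ^^ n) f x t) x t"
    by (intro px_cong[OF S]) auto
  also have "\<dots> = c * px ((px ^^ n) f) x t"
    using Suc.prems assms(1)
    by (auto intro!: px_eqI derivative_eq_intros smooth_on2_has_px smooth_on2_funpow_px)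
  finally show ?case by simp
qed simp

lemma pt_cmult: "smooth_on2 S f \<Longrightarrow> (x, t) \<in> S \<Longrightarrow> pt (\<lambda>x t. c * f x t) x t = c * pt f x t"
  by (auto intro!: pt_eqI derivative_eq_intros smooth_on2_has_pt)

end

section \<open>The Schwarzian derivative\<close>

definition schwarzian_of_deriv :: "(real \<Rightarrow> real \<Rightarrow> real) \<Rightarrow> real \<Rightarrow> real \<Rightarrow> real" where
  "schwarzian_of_deriv p x t = px (px p) x t / p x t - 3 / 2 * (px p x t / p x t)\<^sup>2"

lemma schwarzian_eq_schwarzian_of_deriv: "schwarzian phi = schwarzian_of_deriv (px phi)"
  by (simp add: fun_eq_iff schwarzian_def schwarzian_of_deriv_def)

context
  fixes S :: "(real \<times> real) set"
  assumes S: "open S"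
begin

lemma smooth_on2_schwarzian_of_deriv:
  assumes "smooth_on2 S p" "\<forall>(x, t)\<in>S. p x t \<noteq> 0"
  shows "smooth_on2 S (schwarzian_of_deriv p)"
  unfolding schwarzian_of_deriv_def[abs_def]
  using assms
  by (intro smooth_on2_diff[OF S] smooth_on2_divide[OF S] smooth_on2_mult[OF S] smooth_on2_power2[OF S]
      smooth_on2_const[OF S] smooth_on2_px)

lemma px_schwarzian_of_deriv:
  assumes p: "smooth_on2 S p" and xt: "(x, t) \<in> S" "p x t \<noteq> 0"
  shows "px (schwarzian_of_deriv p) x t = px (px (px p)) x t / p x t
    - 4 * px p x t * px (px p) x t / (p x t)\<^sup>2 + 3 * (px p x t)^3 / (p x t)^3"
  unfolding schwarzian_of_deriv_def using p xt
  by (intro px_eqI)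
    (auto intro!: derivative_eq_intros smooth_on2_has_px[OF S] smooth_on2_px
      simp: field_simps power2_eq_square power3_eq_cube)

text \<open>The classical variation formula of the Schwarzian: if \<open>\<phi>\<^sub>t = q \<phi>\<^sub>x\<close>, then
  \<open>{\<phi>;x}\<^sub>t = q\<^sub>x\<^sub>x\<^sub>x + 2 {\<phi>;x} q\<^sub>x + {\<phi>;x}\<^sub>x q\<close>; here it is stated for \<open>p = \<phi>\<^sub>x\<close>, so that
  the hypothesis reads \<open>p\<^sub>t = (q p)\<^sub>x\<close>.\<close>
lemma pt_schwarzian_of_deriv:
  assumes p: "smooth_on2 S p" "\<forall>(x, t)\<in>S. p x t \<noteq> 0" and q: "smooth_on2 S q"
    and flux: "\<forall>(x, t)\<in>S. pt p x t = px (\<lambda>x t. q x t * p x t) x t"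
    and xt: "(x, t) \<in> S"
  shows "pt (schwarzian_of_deriv p) x t
    = px (px (px q)) x t + 2 * schwarzian_of_deriv p x t * px q x t + px (schwarzian_of_deriv p) x t * q x t"
proof -
  note dx = smooth_on2_has_px[OF S] and dt = smooth_on2_has_pt[OF S] and smooth = smooth_on2_px p(1) q
  have flux1: "\<forall>(x, t)\<in>S. pt (px p) x t = px (px (\<lambda>x t. q x t * p x t)) x t"
    using pt_px_eq_px_px[OF S p(1) flux] by blast
  have "pt p x t = px (\<lambda>x t. q x t * p x t) x t"
    using flux xt by auto
  also have "\<dots> = px q x t * p x t + q x t * px p x t"
    using xt q p by (auto intro!: px_eqI derivative_eq_intros dx)
  finally have pt0: "pt p x t = px q x t * p x t + q x t * px p x t" .
  have pt1: "pt (px p) x t = px (px q) x t * p x t + 2 * px q x t * px p x t + q x t * px (px p) x t"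
    using flux1 xt px_px_mult[OF S q p(1) xt] by auto
  have pt2: "pt (px (px p)) x t = px (px (px q)) x t * p x t + 3 * px (px q) x t * px p x t
      + 3 * px q x t * px (px p) x t + q x t * px (px (px p)) x t"
    using pt_px_eq_px_px[OF S smooth_on2_px[OF p(1)] flux1 xt] px_px_px_mult[OF S q p(1) xt] by simp
  have nz: "p x t \<noteq> 0"
    using p(2) xt by auto
  have pt_sigma: "pt (schwarzian_of_deriv p) x t
      = (pt (px (px p)) x t * p x t - px (px p) x t * pt p x t) / (p x t)\<^sup>2
        - 3 * px p x t * (pt (px p) x t * p x t - px p x t * pt p x t) / (p x t)^3"
    unfolding schwarzian_of_deriv_def using p xt nz
    by (intro pt_eqI) (auto intro!: derivative_eq_intros dt smooth simp: field_simps power2_eq_square power3_eq_cube)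
  show ?thesis
    unfolding pt_sigma px_schwarzian_of_deriv[OF p(1) xt nz] pt0 pt1 pt2 schwarzian_of_deriv_def using nz
    by (simp add: field_simps power2_eq_square power3_eq_cube)
qed

lemma KdV_of_schwarzian_flow:
  assumes p: "smooth_on2 S p" "\<forall>(x, t)\<in>S. p x t \<noteq> 0"
    and flux: "\<forall>(x, t)\<in>S. pt p x t = px (\<lambda>x t. - a * schwarzian_of_deriv p x t * p x t) x t"
    and xt: "(x, t) \<in> S"
  shows "KdV_at a (\<lambda>x t. a * schwarzian_of_deriv p x t) x t"
proof -
  define \<sigma> where "\<sigma> = schwarzian_of_deriv p"
  have \<sigma>: "smooth_on2 S \<sigma>"
    unfolding \<sigma>_def using p by (rule smooth_on2_schwarzian_of_deriv)
  note px_c = funpow_px_cmult[OF S \<sigma> xt]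
  have "pt \<sigma> x t = px (px (px (\<lambda>x t. - a * \<sigma> x t))) x t + 2 * \<sigma> x t * px (\<lambda>x t. - a * \<sigma> x t) x t
      + px \<sigma> x t * (- a * \<sigma> x t)"
    unfolding \<sigma>_def using p flux xt
    by (intro pt_schwarzian_of_deriv smooth_on2_mult[OF S] smooth_on2_const[OF S] smooth_on2_schwarzian_of_deriv)
      auto
  then have evo: "pt \<sigma> x t = - a * px (px (px \<sigma>)) x t - 3 * a * \<sigma> x t * px \<sigma> x t"
    using px_c[of 1 "- a"] px_c[of 3 "- a"] by (simp add: numeral_3_eq_3 algebra_simps)
  have "px (\<lambda>x t. a * \<sigma> x t) x t = a * px \<sigma> x t"
    "px (px (px (\<lambda>x t. a * \<sigma> x t))) x t = a * px (px (px \<sigma>)) x t"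
    using px_c[of 1 a] px_c[of 3 a] by (simp_all add: numeral_3_eq_3)
  then show ?thesis
    unfolding KdV_at_def \<sigma>_def[symmetric] pt_cmult[OF S \<sigma> xt] evo
    by (simp add: algebra_simps)
qed

end

section \<open>From Schwarz--KdV to KdV\<close>

lemma pt_eq_of_SKdV:
  assumes "px phi x t \<noteq> 0" "pt phi x t / px phi x t + a * schwarzian phi x t = 0"
  shows "pt phi x t = - a * schwarzian_of_deriv (px phi) x t * px phi x t"
proof -
  have "pt phi x t + a * schwarzian phi x t * px phi x t = 0"
    using assms by (simp add: field_simps)
  then show ?thesis
    unfolding schwarzian_eq_schwarzian_of_deriv by algebra
qed

lemma schwarzian_flow_of_SKdV:
  assumes S: "open S" and phi: "smooth_on2 S phi" and nz: "\<forall>(x, t)\<in>S. px phi x t \<noteq> 0"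
    and SKdV: "\<forall>(x, t)\<in>S. pt phi x t / px phi x t + a * schwarzian phi x t = 0"
  shows "\<forall>(x, t)\<in>S. pt (px phi) x t = px (\<lambda>x t. - a * schwarzian_of_deriv (px phi) x t * px phi x t) x t"
proof -
  have pt_phi: "pt phi x t = - a * schwarzian_of_deriv (px phi) x t * px phi x t" if "(x, t) \<in> S" for x t
    by (rule pt_eq_of_SKdV) (use that nz SKdV in auto)
  have "pt (px phi) x t = px (\<lambda>x t. - a * schwarzian_of_deriv (px phi) x t * px phi x t) x t"
    if "(x, t) \<in> S" for x t
  proof -
    have "px (pt phi) x t = px (\<lambda>x t. - a * schwarzian_of_deriv (px phi) x t * px phi x t) x t"
      using pt_phi by (intro px_cong[OF S that]) auto
    then show ?thesis
      using pt_px_commute[OF S phi that] by simp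
  qed
  then show ?thesis by blast
qed

lemma KdV_schwarzian:
  assumes S: "open S" and phi: "smooth_on2 S phi" and nz: "\<forall>(x, t)\<in>S. px phi x t \<noteq> 0"
    and SKdV: "\<forall>(x, t)\<in>S. pt phi x t / px phi x t + a * schwarzian phi x t = 0"
    and xt: "(x, t) \<in> S"
  shows "KdV_at a (\<lambda>x t. a * schwarzian phi x t) x t"
  unfolding schwarzian_eq_schwarzian_of_deriv
  using KdV_of_schwarzian_flow[OF S smooth_on2_px[OF phi] nz schwarzian_flow_of_SKdV[OF assms(1-4)] xt] .

section \<open>The second solution\<close>

lemma funpow_px_cong:
  assumes "open S" "\<forall>(x, t)\<in>S. f x t = g x t"
  shows "\<forall>(x, t)\<in>S. (px ^^ n) f x t = (px ^^ n) g x t"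
proof (induction n)
  case (Suc n)
  then show ?case
    using px_cong[OF assms(1)] by auto
qed (use assms(2) in simp)

lemma KdV_at_cong:
  assumes "open S" "\<forall>(x, t)\<in>S. u x t = v x t" "(x, t) \<in> S"
  shows "KdV_at a u x t \<longleftrightarrow> KdV_at a v x t"
proof -
  have "px u x t = px v x t" "px (px (px u)) x t = px (px (px v)) x t"
    using funpow_px_cong[OF assms(1,2), of 1] funpow_px_cong[OF assms(1,2), of 3] assms(3)
    by (auto simp: numeral_3_eq_3)
  moreover have "pt u x t = pt v x t" "u x t = v x t"
    using pt_cong[OF assms(1,3,2)] assms(2,3) by auto
  ultimately show ?thesis
    unfolding KdV_at_def by simp
qed

lemma ln_abs_div_sqrt_abs:
  fixes w p :: real
  assumes "w \<noteq> 0" "p \<noteq> 0"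
  shows "ln (\<bar>w\<bar> / sqrt \<bar>p\<bar>) = ln (w\<^sup>2) / 2 - ln (p\<^sup>2) / 4"
proof -
  have "ln (w\<^sup>2) = 2 * ln \<bar>w\<bar>" "ln (p\<^sup>2) = 2 * ln \<bar>p\<bar>"
    using ln_realpow[of "\<bar>w\<bar>" 2] ln_realpow[of "\<bar>p\<bar>" 2] by simp_all
  moreover have "ln (\<bar>w\<bar> / sqrt \<bar>p\<bar>) = ln \<bar>w\<bar> - ln \<bar>p\<bar> / 2"
    using assms by (simp add: ln_div ln_sqrt)
  ultimately show ?thesis
    by simp
qed

text \<open>Here \<open>w\<close> stands for \<open>A \<phi> + B\<close>.\<close>
context
  fixes U :: "(real \<times> real) set" and phi w :: "real \<Rightarrow> real \<Rightarrow> real" and A :: real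
  assumes U: "open U" and phi: "smooth_on2 U phi" and w: "smooth_on2 U w"
    and phi_x: "\<And>x t. (x, t) \<in> U \<Longrightarrow> px phi x t \<noteq> 0"
    and w_nz: "\<And>x t. (x, t) \<in> U \<Longrightarrow> w x t \<noteq> 0"
    and w_x: "\<And>x t. (x, t) \<in> U \<Longrightarrow> px w x t = A * px phi x t"
    and w_t: "\<And>x t. (x, t) \<in> U \<Longrightarrow> pt w x t = A * pt phi x t"
begin

lemma px_log_backlund:
  "\<forall>(x, t)\<in>U. px (\<lambda>y s. ln (\<bar>w y s\<bar> / sqrt \<bar>px phi y s\<bar>)) x t
     = A * px phi x t / w x t - px (px phi) x t / (2 * px phi x t)"
proof clarify
  fix x t assume xt: "(x, t) \<in> U"
  have "px (\<lambda>y s. ln (\<bar>w y s\<bar> / sqrt \<bar>px phi y s\<bar>)) x t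
      = px (\<lambda>y s. ln ((w y s)\<^sup>2) / 2 - ln ((px phi y s)\<^sup>2) / 4) x t"
  proof (rule px_cong[OF U xt], clarify)
    fix y s assume "(y, s) \<in> U"
    then have "w y s \<noteq> 0" "px phi y s \<noteq> 0"
      using phi_x w_nz by auto
    then show "ln (\<bar>w y s\<bar> / sqrt \<bar>px phi y s\<bar>) = ln ((w y s)\<^sup>2) / 2 - ln ((px phi y s)\<^sup>2) / 4"
      by (rule ln_abs_div_sqrt_abs)
  qed
  also have "\<dots> = A * px phi x t / w x t - px (px phi) x t / (2 * px phi x t)"
  proof (rule px_eqI)
    have nz: "w x t \<noteq> 0" "px phi x t \<noteq> 0"
      using xt phi_x w_nz by auto
    then have pos: "0 < (w x t)\<^sup>2" "0 < (px phi x t)\<^sup>2"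
      by simp_all
    show "((\<lambda>y. ln ((w y t)\<^sup>2) / 2 - ln ((px phi y t)\<^sup>2) / 4) has_real_derivative
        A * px phi x t / w x t - px (px phi) x t / (2 * px phi x t)) (at x)"
      using nz pos w_x xt
      by (auto intro!: derivative_eq_intros smooth_on2_has_px[OF U w xt]
          smooth_on2_has_px[OF U smooth_on2_px[OF phi] xt] simp: field_simps power2_eq_square)
  qed
  finally show "px (\<lambda>y s. ln (\<bar>w y s\<bar> / sqrt \<bar>px phi y s\<bar>)) x t
     = A * px phi x t / w x t - px (px phi) x t / (2 * px phi x t)" .
qed

lemma px_px_log_backlund:
  assumes xt: "(x, t) \<in> U"
  shows "px (px (\<lambda>y s. ln (\<bar>w y s\<bar> / sqrt \<bar>px phi y s\<bar>))) x t
    = A * px (px phi) x t / w x t - (A * px phi x t / w x t)\<^sup>2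
      - px (px (px phi)) x t / (2 * px phi x t) + (px (px phi) x t / px phi x t)\<^sup>2 / 2"
proof -
  have nz: "w x t \<noteq> 0" "px phi x t \<noteq> 0"
    using xt phi_x w_nz by auto
  have "px (px (\<lambda>y s. ln (\<bar>w y s\<bar> / sqrt \<bar>px phi y s\<bar>))) x t
      = px (\<lambda>x t. A * px phi x t / w x t - px (px phi) x t / (2 * px phi x t)) x t"
    using px_log_backlund by (rule px_cong[OF U xt])
  also have "\<dots> = A * px (px phi) x t / w x t - (A * px phi x t / w x t)\<^sup>2
      - px (px (px phi)) x t / (2 * px phi x t) + (px (px phi) x t / px phi x t)\<^sup>2 / 2"
    using nz w_x xt
    by (intro px_eqI) (auto intro!: derivative_eq_intros smooth_on2_has_px[OF U w xt]
        smooth_on2_has_px[OF U _ xt] smooth_on2_px phi simp: field_simps power2_eq_square)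
  finally show ?thesis .
qed

lemma schwarzian_of_deriv_backlund:
  assumes xt: "(x, t) \<in> U"
  shows "schwarzian_of_deriv (\<lambda>x t. (w x t)\<^sup>2 / px phi x t) x t
    = - px (px (px phi)) x t / px phi x t + (px (px phi) x t / px phi x t)\<^sup>2 / 2
      + 4 * A * px (px phi) x t / w x t - 4 * (A * px phi x t / w x t)\<^sup>2"
proof -
  note dx = smooth_on2_has_px[OF U] smooth_on2_px phi w
  have nz: "w x t \<noteq> 0" "px phi x t \<noteq> 0"
    using xt phi_x w_nz by auto
  have px1: "px (\<lambda>x t. (w x t)\<^sup>2 / px phi x t) x t
      = 2 * A * w x t - (w x t)\<^sup>2 * px (px phi) x t / (px phi x t)\<^sup>2" if "(x, t) \<in> U" for x t
    using that phi_x w_x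
    by (intro px_eqI) (auto intro!: derivative_eq_intros dx simp: field_simps power2_eq_square)
  have "px (px (\<lambda>x t. (w x t)\<^sup>2 / px phi x t)) x t
      = px (\<lambda>x t. 2 * A * w x t - (w x t)\<^sup>2 * px (px phi) x t / (px phi x t)\<^sup>2) x t"
    using px1 by (intro px_cong[OF U xt]) auto
  also have "\<dots> = 2 * A\<^sup>2 * px phi x t
      - (2 * A * w x t * px phi x t * px (px phi) x t + (w x t)\<^sup>2 * px (px (px phi)) x t) / (px phi x t)\<^sup>2
      + 2 * (w x t)\<^sup>2 * (px (px phi) x t)\<^sup>2 / (px phi x t)^3"
    using nz w_x xt
    by (intro px_eqI) (auto intro!: derivative_eq_intros dx simp: field_simps power2_eq_square power3_eq_cube power4_eq_xxxx)
  finally have px2: "px (px (\<lambda>x t. (w x t)\<^sup>2 / px phi x t)) x t = 2 * A\<^sup>2 * px phi x t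
      - (2 * A * w x t * px phi x t * px (px phi) x t + (w x t)\<^sup>2 * px (px (px phi)) x t) / (px phi x t)\<^sup>2
      + 2 * (w x t)\<^sup>2 * (px (px phi) x t)\<^sup>2 / (px phi x t)^3" .
  show ?thesis
    unfolding schwarzian_of_deriv_def px2 px1[OF xt] using nz
    by (simp add: field_simps power2_eq_square power3_eq_cube)
qed

lemma schwarzian_add_px_px_log_backlund:
  assumes xt: "(x, t) \<in> U"
  shows "schwarzian phi x t + 4 * px (px (\<lambda>y s. ln (\<bar>w y s\<bar> / sqrt \<bar>px phi y s\<bar>))) x t
    = schwarzian_of_deriv (\<lambda>x t. (w x t)\<^sup>2 / px phi x t) x t"
  unfolding px_px_log_backlund[OF xt] schwarzian_of_deriv_backlund[OF xt] schwarzian_def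
  using phi_x[OF xt] w_nz[OF xt] by (simp add: field_simps power2_eq_square)

lemma pt_backlund_density:
  assumes pt_phi: "\<And>x t. (x, t) \<in> U \<Longrightarrow> pt phi x t = - a * schwarzian_of_deriv (px phi) x t * px phi x t"
    and flux: "\<And>x t. (x, t) \<in> U \<Longrightarrow>
      pt (px phi) x t = px (\<lambda>x t. - a * schwarzian_of_deriv (px phi) x t * px phi x t) x t"
    and xt: "(x, t) \<in> U"
  shows "pt (\<lambda>x t. (w x t)\<^sup>2 / px phi x t) x t
    = a * (px (px (px (px phi))) x t * (w x t)\<^sup>2 / (px phi x t)\<^sup>2
      - 2 * A * w x t * px (px (px phi)) x t / px phi x t
      - 3 * px (px phi) x t * px (px (px phi)) x t * (w x t)\<^sup>2 / (px phi x t)^3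
      + 3 * A * w x t * (px (px phi) x t)\<^sup>2 / (px phi x t)\<^sup>2
      + 3 / 2 * (px (px phi) x t)^3 * (w x t)\<^sup>2 / (px phi x t)^4)"
proof -
  define \<sigma> where "\<sigma> = schwarzian_of_deriv (px phi)"
  have \<sigma>: "smooth_on2 U \<sigma>"
    unfolding \<sigma>_def using phi_x by (intro smooth_on2_schwarzian_of_deriv[OF U] smooth_on2_px phi) auto
  note nz = phi_x[OF xt] w_nz[OF xt]
  have "pt (px phi) x t = px (\<lambda>x t. - a * \<sigma> x t * px phi x t) x t"
    unfolding \<sigma>_def by (rule flux[OF xt])
  also have "\<dots> = - a * (px \<sigma> x t * px phi x t + \<sigma> x t * px (px phi) x t)"
    using xt by (intro px_eqI)
      (auto intro!: derivative_eq_intros smooth_on2_has_px[OF U] smooth_on2_px phi \<sigma> simp: algebra_simps)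
  finally have pt_px_phi: "pt (px phi) x t = \<dots>" .
  have pt_w: "pt w x t = - a * A * \<sigma> x t * px phi x t"
    using w_t[OF xt] pt_phi[OF xt] by (simp add: \<sigma>_def)
  have "((\<lambda>s. (w x s)\<^sup>2 / px phi x s) has_real_derivative
      (2 * w x t * pt w x t * px phi x t - (w x t)\<^sup>2 * pt (px phi) x t) / (px phi x t)\<^sup>2) (at t)"
    using nz by (auto intro!: derivative_eq_intros smooth_on2_has_pt[OF U _ xt] smooth_on2_px phi w
        simp: field_simps power2_eq_square)
  then have "pt (\<lambda>x t. (w x t)\<^sup>2 / px phi x t) x t
      = (2 * w x t * pt w x t * px phi x t - (w x t)\<^sup>2 * pt (px phi) x t) / (px phi x t)\<^sup>2"
    by (rule pt_eqI)
  also have "\<dots> = a * (px (px (px (px phi))) x t * (w x t)\<^sup>2 / (px phi x t)\<^sup>2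
      - 2 * A * w x t * px (px (px phi)) x t / px phi x t
      - 3 * px (px phi) x t * px (px (px phi)) x t * (w x t)\<^sup>2 / (px phi x t)^3
      + 3 * A * w x t * (px (px phi) x t)\<^sup>2 / (px phi x t)\<^sup>2
      + 3 / 2 * (px (px phi) x t)^3 * (w x t)\<^sup>2 / (px phi x t)^4)"
    unfolding pt_w pt_px_phi px_schwarzian_of_deriv[OF U smooth_on2_px[OF phi] xt nz(1), folded \<sigma>_def]
    unfolding \<sigma>_def schwarzian_of_deriv_def
    using nz by (simp add: field_simps power2_eq_square power3_eq_cube power4_eq_xxxx)
  finally show ?thesis .
qed

lemma px_backlund_flux:
  assumes xt: "(x, t) \<in> U"
  shows "px (\<lambda>x t. - a * schwarzian_of_deriv (\<lambda>x t. (w x t)\<^sup>2 / px phi x t) x t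
      * ((w x t)\<^sup>2 / px phi x t)) x t
    = a * (px (px (px (px phi))) x t * (w x t)\<^sup>2 / (px phi x t)\<^sup>2
      - 2 * A * w x t * px (px (px phi)) x t / px phi x t
      - 3 * px (px phi) x t * px (px (px phi)) x t * (w x t)\<^sup>2 / (px phi x t)^3
      + 3 * A * w x t * (px (px phi) x t)\<^sup>2 / (px phi x t)\<^sup>2
      + 3 / 2 * (px (px phi) x t)^3 * (w x t)\<^sup>2 / (px phi x t)^4)"
proof -
  have "px (\<lambda>x t. - a * schwarzian_of_deriv (\<lambda>x t. (w x t)\<^sup>2 / px phi x t) x t
      * ((w x t)\<^sup>2 / px phi x t)) x t
    = px (\<lambda>x t. a * (px (px (px phi)) x t * (w x t)\<^sup>2 / (px phi x t)\<^sup>2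
      - (px (px phi) x t)\<^sup>2 * (w x t)\<^sup>2 / (2 * (px phi x t)^3)
      - 4 * A * px (px phi) x t * w x t / px phi x t + 4 * A\<^sup>2 * px phi x t)) x t"
  proof (rule px_cong[OF U xt], clarify)
    fix y s assume ys: "(y, s) \<in> U"
    show "- a * schwarzian_of_deriv (\<lambda>x t. (w x t)\<^sup>2 / px phi x t) y s * ((w y s)\<^sup>2 / px phi y s)
      = a * (px (px (px phi)) y s * (w y s)\<^sup>2 / (px phi y s)\<^sup>2
        - (px (px phi) y s)\<^sup>2 * (w y s)\<^sup>2 / (2 * (px phi y s)^3)
        - 4 * A * px (px phi) y s * w y s / px phi y s + 4 * A\<^sup>2 * px phi y s)"
      unfolding schwarzian_of_deriv_backlund[OF ys] using phi_x[OF ys] w_nz[OF ys]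
      by (simp add: field_simps power2_eq_square power3_eq_cube)
  qed
  also have "\<dots> = a * (px (px (px (px phi))) x t * (w x t)\<^sup>2 / (px phi x t)\<^sup>2
      - 2 * A * w x t * px (px (px phi)) x t / px phi x t
      - 3 * px (px phi) x t * px (px (px phi)) x t * (w x t)\<^sup>2 / (px phi x t)^3
      + 3 * A * w x t * (px (px phi) x t)\<^sup>2 / (px phi x t)\<^sup>2
      + 3 / 2 * (px (px phi) x t)^3 * (w x t)\<^sup>2 / (px phi x t)^4)"
  proof (rule px_eqI)
    have "((\<lambda>y. w y t) has_real_derivative A * px phi x t) (at x)"
      using smooth_on2_has_px[OF U w xt] w_x[OF xt] by simp
    moreover have "((\<lambda>y. px phi y t) has_real_derivative px (px phi) x t) (at x)"
      "((\<lambda>y. px (px phi) y t) has_real_derivative px (px (px phi)) x t) (at x)"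
      "((\<lambda>y. px (px (px phi)) y t) has_real_derivative px (px (px (px phi))) x t) (at x)"
      by (intro smooth_on2_has_px[OF U _ xt] smooth_on2_px phi)+
    ultimately show "((\<lambda>y. a * (px (px (px phi)) y t * (w y t)\<^sup>2 / (px phi y t)\<^sup>2
        - (px (px phi) y t)\<^sup>2 * (w y t)\<^sup>2 / (2 * (px phi y t)^3)
        - 4 * A * px (px phi) y t * w y t / px phi y t + 4 * A\<^sup>2 * px phi y t)) has_real_derivative
        a * (px (px (px (px phi))) x t * (w x t)\<^sup>2 / (px phi x t)\<^sup>2
      - 2 * A * w x t * px (px (px phi)) x t / px phi x t
      - 3 * px (px phi) x t * px (px (px phi)) x t * (w x t)\<^sup>2 / (px phi x t)^3
      + 3 * A * w x t * (px (px phi) x t)\<^sup>2 / (px phi x t)\<^sup>2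
      + 3 / 2 * (px (px phi) x t)^3 * (w x t)\<^sup>2 / (px phi x t)^4)) (at x)"
      using phi_x[OF xt] w_nz[OF xt]
      by (auto intro!: derivative_eq_intros simp: field_simps power2_eq_square power3_eq_cube power4_eq_xxxx)
  qed
  finally show ?thesis .
qed

lemma schwarzian_flow_backlund:
  assumes "\<And>x t. (x, t) \<in> U \<Longrightarrow> pt phi x t = - a * schwarzian_of_deriv (px phi) x t * px phi x t"
    and "\<And>x t. (x, t) \<in> U \<Longrightarrow>
      pt (px phi) x t = px (\<lambda>x t. - a * schwarzian_of_deriv (px phi) x t * px phi x t) x t"
    and "(x, t) \<in> U"
  shows "pt (\<lambda>x t. (w x t)\<^sup>2 / px phi x t) x t
    = px (\<lambda>x t. - a * schwarzian_of_deriv (\<lambda>x t. (w x t)\<^sup>2 / px phi x t) x t * ((w x t)\<^sup>2 / px phi x t)) x t"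
  using pt_backlund_density[OF assms] px_backlund_flux[OF assms(3)] by simp

lemma KdV_schwarzian_add_px_px_log_backlund:
  assumes SKdV: "\<forall>(x, t)\<in>U. pt phi x t / px phi x t + a * schwarzian phi x t = 0"
    and xt: "(x, t) \<in> U"
  shows "KdV_at a (\<lambda>x t. a * schwarzian phi x t
    + 4 * a * px (px (\<lambda>y s. ln (\<bar>w y s\<bar> / sqrt \<bar>px phi y s\<bar>))) x t) x t"
proof -
  define p where "p = (\<lambda>x t. (w x t)\<^sup>2 / px phi x t)"
  have nz: "\<forall>(x, t)\<in>U. px phi x t \<noteq> 0"
    using phi_x by blast
  have p: "smooth_on2 U p" "\<forall>(x, t)\<in>U. p x t \<noteq> 0"
    unfolding p_def using nz w_nz
    by (auto intro!: smooth_on2_divide[OF U smooth_on2_power2[OF U w] smooth_on2_px[OF phi]])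
  have pt_phi: "pt phi x t = - a * schwarzian_of_deriv (px phi) x t * px phi x t" if "(x, t) \<in> U" for x t
    by (rule pt_eq_of_SKdV) (use that phi_x SKdV in auto)
  have flux: "pt (px phi) x t = px (\<lambda>x t. - a * schwarzian_of_deriv (px phi) x t * px phi x t) x t"
    if "(x, t) \<in> U" for x t
    using schwarzian_flow_of_SKdV[OF U phi nz SKdV] that by blast
  have KdV: "KdV_at a (\<lambda>x t. a * schwarzian_of_deriv p x t) x t"
  proof (rule KdV_of_schwarzian_flow[OF U p _ xt], clarify)
    fix x t assume "(x, t) \<in> U"
    then show "pt p x t = px (\<lambda>x t. - a * schwarzian_of_deriv p x t * p x t) x t"
      unfolding p_def by (intro schwarzian_flow_backlund) (simp_all add: pt_phi flux)
  qed
  have "a * schwarzian phi x t + 4 * a * px (px (\<lambda>y s. ln (\<bar>w y s\<bar> / sqrt \<bar>px phi y s\<bar>))) x t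
    = a * schwarzian_of_deriv p x t" if "(x, t) \<in> U" for x t
  proof -
    have "a * (schwarzian phi x t + 4 * px (px (\<lambda>y s. ln (\<bar>w y s\<bar> / sqrt \<bar>px phi y s\<bar>))) x t)
      = a * schwarzian_of_deriv p x t"
      unfolding p_def schwarzian_add_px_px_log_backlund[OF that] ..
    then show ?thesis
      by (simp add: distrib_left mult.assoc mult.left_commute)
  qed
  then have u_eq: "\<forall>(x, t)\<in>U. a * schwarzian phi x t
      + 4 * a * px (px (\<lambda>y s. ln (\<bar>w y s\<bar> / sqrt \<bar>px phi y s\<bar>))) x t
    = a * schwarzian_of_deriv p x t"
    by blast
  show ?thesis
    using KdV KdV_at_cong[OF U u_eq xt] by simp
qed

end

lemma KdV_backlund:
  assumes U: "open U" and phi: "smooth_on2 U phi" and nz: "\<forall>(x, t)\<in>U. px phi x t \<noteq> 0"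
    and SKdV: "\<forall>(x, t)\<in>U. pt phi x t / px phi x t + a * schwarzian phi x t = 0"
    and w_nz: "\<forall>(x, t)\<in>U. A * phi x t + B \<noteq> 0"
    and xt: "(x, t) \<in> U"
  shows "KdV_at a (\<lambda>x t. a * schwarzian phi x t
    + 4 * a * px (px (\<lambda>y s. ln (\<bar>A * phi y s + B\<bar> / sqrt \<bar>px phi y s\<bar>))) x t) x t"
proof (rule KdV_schwarzian_add_px_px_log_backlund[OF U phi _ _ _ _ _ SKdV xt])
  show "smooth_on2 U (\<lambda>x t. A * phi x t + B)"
    by (rule smooth_on2_add[OF U smooth_on2_mult[OF U smooth_on2_const[OF U] phi] smooth_on2_const[OF U]])
  show "px (\<lambda>x t. A * phi x t + B) x t = A * px phi x t" if "(x, t) \<in> U" for x t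
    by (rule px_eqI) (auto intro!: derivative_eq_intros smooth_on2_has_px[OF U phi that])
  show "pt (\<lambda>x t. A * phi x t + B) x t = A * pt phi x t" if "(x, t) \<in> U" for x t
    by (rule pt_eqI) (auto intro!: derivative_eq_intros smooth_on2_has_pt[OF U phi that])
qed (use nz w_nz in auto)

theorem mainTheorem8:
  fixes phi :: "real \<Rightarrow> real \<Rightarrow> real" and a :: real and \<Omega> :: "(real \<times> real) set"
  assumes "a \<noteq> 0"
    and "open \<Omega>"
    and "smooth_on2 \<Omega> phi"
    and "\<forall>(x, t)\<in>\<Omega>. px phi x t \<noteq> 0"
    and "\<forall>(x, t)\<in>\<Omega>. pt phi x t / px phi x t + a * schwarzian phi x t = 0"
  shows "(\<forall>(x, t)\<in>\<Omega>. KdV_at a (\<lambda>x t. a * schwarzian phi x t) x t)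
    \<and> (\<forall>A B U. (A \<noteq> 0 \<or> B \<noteq> 0) \<longrightarrow> open U \<longrightarrow> U \<subseteq> \<Omega> \<longrightarrow>
         (\<forall>(x, t)\<in>U. A * phi x t + B \<noteq> 0) \<longrightarrow>
         (\<forall>(x, t)\<in>U. KdV_at a
            (\<lambda>x t. a * schwarzian phi x t
                  + 4 * a * px (px (\<lambda>y s. ln (\<bar>A * phi y s + B\<bar> / sqrt \<bar>px phi y s\<bar>))) x t) x t))"
proof (intro conjI allI impI)
  show "\<forall>(x, t)\<in>\<Omega>. KdV_at a (\<lambda>x t. a * schwarzian phi x t) x t"
    using KdV_schwarzian[OF assms(2-5)] by blast
next
  fix A B U
  assume U: "open U" "U \<subseteq> \<Omega>" and w_nz: "\<forall>(x, t)\<in>U. A * phi x t + B \<noteq> 0"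
  have "smooth_on2 U phi" "\<forall>(x, t)\<in>U. px phi x t \<noteq> 0"
    "\<forall>(x, t)\<in>U. pt phi x t / px phi x t + a * schwarzian phi x t = 0"
    using assms(3-5) U(2) smooth_on2_subset by auto
  then show "\<forall>(x, t)\<in>U. KdV_at a
      (\<lambda>x t. a * schwarzian phi x t
        + 4 * a * px (px (\<lambda>y s. ln (\<bar>A * phi y s + B\<bar> / sqrt \<bar>px phi y s\<bar>))) x t) x t"
    using KdV_backlund[OF U(1) _ _ _ w_nz] by blast
qed

end
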